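(* Let $\alpha>0$, $\gamma<0$, $\theta=(\alpha,-(\alpha+\gamma)/4,\gamma)$, and let $R$ be a representation of $\mathbf{Q}$ with dimension vector $(1,4,1)$ that is $\theta$-stable. If $R$ is not globally injective, then $\gamma<-\alpha$. If $R$ is not globally surjective, then $\gamma>-\alpha$.
   Context: The quiver $\mathbf{Q}$ has vertices $-1,0,1$, arrows $\eta_0,\dots,\eta_3:-1\to0$, $\phi_0,\dots,\phi_3:0\to1$ and relations $\phi_i\eta_j+\phi_j\eta_i=0$; a representation consists of vector spaces $V_{-1},V_0,V_1$ and linear maps $f_i:V_{-1}\to V_0$, $g_i:V_0\to V_1$ with $g_if_j+g_jf_i=0$. $R$ is globally injective (resp. surjective) if $\sum\lambda_if_i$ is injective (resp. $\sum\lambda_ig_i$ surjective) for all $\lambda\in\mathbb{C}^4\setminus\{0\}$. $R$ is $\theta$-stable if $\theta\cdot\dim R=0$ and $\theta\cdot\dim S<0$ for every nonzero proper subrepresentation $S$. *)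

theory Defs
  imports "HOL-Analysis.Analysis"
begin

text \<open>A representation of the quiver Q with dimension vector (1,4,1), after choosing bases:
  V_{-1} = complex^1, V_0 = complex^4, V_1 = complex^1.  The arrows eta_i, phi_i are indexed
  by the type 4; f i :: complex^1^4 is the matrix of f_i : V_{-1} -> V_0 and
  g i :: complex^4^1 is the matrix of g_i : V_0 -> V_1.\<close>

type_synonym repQ = "(4 \<Rightarrow> complex^1^4) \<times> (4 \<Rightarrow> complex^4^1)"

definition rep_f :: "repQ \<Rightarrow> 4 \<Rightarrow> complex^1^4" where "rep_f R = fst R"
definition rep_g :: "repQ \<Rightarrow> 4 \<Rightarrow> complex^4^1" where "rep_g R = snd R"

definition relations_hold :: "repQ \<Rightarrow> bool" where
  "relations_hold R \<longleftrightarrow> (\<forall>i j. rep_g R i ** rep_f R j + rep_g R j ** rep_f R i = 0)"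

definition is_subrep :: "repQ \<Rightarrow> (complex^1) set \<Rightarrow> (complex^4) set \<Rightarrow> (complex^1) set \<Rightarrow> bool" where
  "is_subrep R S0 S1 S2 \<longleftrightarrow> vec.subspace S0 \<and> vec.subspace S1 \<and> vec.subspace S2 \<and>
     (\<forall>i x. x \<in> S0 \<longrightarrow> rep_f R i *v x \<in> S1) \<and>
     (\<forall>i y. y \<in> S1 \<longrightarrow> rep_g R i *v y \<in> S2)"

definition theta_stable :: "real \<times> real \<times> real \<Rightarrow> repQ \<Rightarrow> bool" where
  "theta_stable \<theta> R \<longleftrightarrow>
     (case \<theta> of (t1, t2, t3) \<Rightarrow>
       t1 * 1 + t2 * 4 + t3 * 1 = 0 \<and>
       (\<forall>S0 S1 S2. is_subrep R S0 S1 S2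
          \<and> \<not> (S0 = {0} \<and> S1 = {0} \<and> S2 = {0})
          \<and> \<not> (S0 = UNIV \<and> S1 = UNIV \<and> S2 = UNIV)
          \<longrightarrow> t1 * real (vec.dim S0) + t2 * real (vec.dim S1) + t3 * real (vec.dim S2) < 0))"

definition globally_injective :: "repQ \<Rightarrow> bool" where
  "globally_injective R \<longleftrightarrow>
     (\<forall>c::complex^4. c \<noteq> 0 \<longrightarrow> inj (\<lambda>x. \<Sum>i\<in>UNIV. (c $ i) *s (rep_f R i *v x)))"

definition globally_surjective :: "repQ \<Rightarrow> bool" where
  "globally_surjective R \<longleftrightarrow>
     (\<forall>c::complex^4. c \<noteq> 0 \<longrightarrow> surj (\<lambda>y. \<Sum>i\<in>UNIV. (c $ i) *s (rep_g R i *v y)))"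

end

(* If the pencil Sum_i c_i f_i kills a nonzero z in the line V_(-1), the four vectors f_i z are
   linearly dependent, so they span a subspace S of V_0 of dimension at most 3 containing every
   f_i(V_(-1)); stability for the subrepresentation (V_(-1), S, V_1) reads
   alpha - (alpha + gamma) dim S / 4 + gamma < 0, which forces alpha + gamma < 0.
   A pencil Sum_i c_i g_i onto the line V_1 that is not surjective is zero, so c is a left kernel
   vector of the 4x4 matrix with rows g_i; this matrix is therefore singular, the g_i have a common
   kernel K <> 0, and stability for (0, K, 0) gives -(alpha + gamma) dim K / 4 < 0. *)

theory Submission
  imports Defs
begin

lemma (in vector_space) dim_dependent_family_less_card:
  assumes "finite I" "k \<in> I" "c k \<noteq> 0" "(\<Sum>i\<in>I. scale (c i) (v i)) = 0"
  shows "dim (v ` I) < card I"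
proof -
  have "scale (c k) (v k) = - (\<Sum>i\<in>I - {k}. scale (c i) (v i))"
    using assms(1,2,4) by (simp add: sum.remove eq_neg_iff_add_eq_0)
  then have "v k = scale (- inverse (c k)) (\<Sum>i\<in>I - {k}. scale (c i) (v i))"
    using assms(3) by (metis scale_minus_left scale_minus_right scale_one scale_scale left_inverse)
  also have "\<dots> \<in> span (v ` (I - {k}))"
    by (intro span_scale span_sum span_base) auto
  finally have "v ` I \<subseteq> span (v ` (I - {k}))"
    by (auto intro: span_base)
  then have "dim (v ` I) \<le> card (v ` (I - {k}))"
    using assms(1) by (intro dim_le_card) auto
  also have "\<dots> \<le> card (I - {k})"
    using assms(1) by (intro card_image_le) auto
  also have "\<dots> < card I"
    using assms(1,2) by (rule card_Diff1_less)
  finally show ?thesis .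
qed

lemma vec1_eq_scale_nonzero:
  fixes x z :: "'a::field^1"
  assumes "z \<noteq> 0"
  shows "x = (x$1 / z$1) *s z"
  using assms by (simp add: vec_eq_iff forall_1)

definition lincomb_matrix :: "('i::finite \<Rightarrow> 'a::semiring_1) \<Rightarrow> ('i \<Rightarrow> 'a^'n^'m) \<Rightarrow> 'a^'n^'m" where
  "lincomb_matrix c A = (\<chi> r s. \<Sum>i\<in>UNIV. c i * A i $ r $ s)"

lemma lincomb_matrix_vector_mult:
  fixes A :: "'i::finite \<Rightarrow> 'a::field^'n^'m"
  shows "lincomb_matrix c A *v x = (\<Sum>i\<in>UNIV. c i *s (A i *v x))"
proof -
  have "(\<Sum>s\<in>UNIV. (\<Sum>i\<in>UNIV. c i * A i $ r $ s) * x $ s) =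
      (\<Sum>i\<in>UNIV. c i * (\<Sum>s\<in>UNIV. A i $ r $ s * x $ s))" for r
    unfolding sum_distrib_left sum_distrib_right mult.assoc by (rule sum.swap)
  then show ?thesis
    by (simp add: lincomb_matrix_def vec_eq_iff matrix_vector_mult_def)
qed

lemma surj_matrix_vector_mult_row:
  fixes N :: "'a::field^'n^1"
  assumes "N \<noteq> 0"
  shows "surj ((*v) N)"
proof -
  obtain j where j: "N$1$j \<noteq> 0"
    using assms by (auto simp: vec_eq_iff forall_1)
  have "N *v axis j (t$1 / N$1$j) = t" for t
    using j by (simp add: vec_eq_iff forall_1 matrix_vector_mult_def axis_def if_distrib cong: if_cong)
  then show ?thesis
    by (metis surj_def)
qed

lemma matrix_kernel_nontrivial_of_left_kernel:
  fixes M :: "'a::field^'n^'n"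
  assumes "c \<noteq> 0" and "c v* M = 0"
  obtains y where "y \<noteq> 0" and "M *v y = 0"
proof -
  have "\<not> inj ((*v) (transpose M))"
    using assms by (simp add: vec.inj_iff_eq_0) blast
  then have "det M = 0"
    using det_nz_iff_inj_gen[OF matrix_vector_mul_linear_gen, of "transpose M"] by simp
  then have "\<not> inj ((*v) M)"
    using det_nz_iff_inj_gen[OF matrix_vector_mul_linear_gen, of M] by simp
  then show ?thesis
    using that by (auto simp: vec.inj_iff_eq_0)
qed

lemma theta_stableD:
  assumes "theta_stable (\<alpha>, \<beta>, \<gamma>) R" and "is_subrep R S0 S1 S2"
    and "\<not> (S0 = {0} \<and> S1 = {0} \<and> S2 = {0})" and "\<not> (S0 = UNIV \<and> S1 = UNIV \<and> S2 = UNIV)"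
  shows "\<alpha> * real (vec.dim S0) + \<beta> * real (vec.dim S1) + \<gamma> * real (vec.dim S2) < 0"
  using assms unfolding theta_stable_def by simp

lemma subrep_of_not_globally_injective:
  assumes "\<not> globally_injective R"
  obtains S where "is_subrep R UNIV S UNIV" and "vec.dim S < 4"
proof -
  obtain c :: "complex^4" where "c \<noteq> 0"
    and "\<not> inj ((*v) (lincomb_matrix (($) c) (rep_f R)))"
    using assms by (auto simp: globally_injective_def lincomb_matrix_vector_mult[symmetric])
  then obtain z where "z \<noteq> 0" and "lincomb_matrix (($) c) (rep_f R) *v z = 0"
    by (auto simp: vec.inj_iff_eq_0)
  define v where "v i = rep_f R i *v z" for i
  obtain k where "c$k \<noteq> 0"
    using \<open>c \<noteq> 0\<close> by (auto simp: vec_eq_iff)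
  moreover have "(\<Sum>i\<in>UNIV. c$i *s v i) = 0"
    using \<open>lincomb_matrix (($) c) (rep_f R) *v z = 0\<close>
    by (simp add: v_def lincomb_matrix_vector_mult)
  ultimately have "vec.dim (range v) < 4"
    using vec.dim_dependent_family_less_card[of UNIV k "\<lambda>i. c$i" v] by simp
  moreover have "rep_f R i *v x \<in> vec.span (range v)" for i x
  proof -
    have "rep_f R i *v x = (x$1 / z$1) *s v i"
      using vec1_eq_scale_nonzero[OF \<open>z \<noteq> 0\<close>, of x] by (metis v_def vector_scalar_commute)
    then show ?thesis
      by (simp add: vec.span_base vec.span_scale)
  qed
  ultimately show ?thesis
    using that[of "vec.span (range v)"]
    by (simp add: is_subrep_def vec.subspace_UNIV)
qed

lemma subrep_of_not_globally_surjective: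
  assumes "\<not> globally_surjective R"
  obtains K where "is_subrep R {0} K {0}" and "K \<noteq> {0}"
proof -
  obtain c :: "complex^4" where "c \<noteq> 0"
    and "\<not> surj ((*v) (lincomb_matrix (($) c) (rep_g R)))"
    using assms by (auto simp: globally_surjective_def lincomb_matrix_vector_mult[symmetric])
  then have "lincomb_matrix (($) c) (rep_g R) = 0"
    using surj_matrix_vector_mult_row by blast
  define M :: "complex^4^4" where "M = (\<chi> i. rep_g R i $ 1)"
  have "c v* M = lincomb_matrix (($) c) (rep_g R) $ 1"
    by (simp add: M_def lincomb_matrix_def vec_eq_iff vector_matrix_mult_def mult.commute)
  then obtain y where "y \<noteq> 0" and "M *v y = 0"
    using matrix_kernel_nontrivial_of_left_kernel \<open>c \<noteq> 0\<close>
      \<open>lincomb_matrix (($) c) (rep_g R) = 0\<close> by auto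
  define K where "K = {x. \<forall>i. rep_g R i *v x = 0}"
  have "rep_g R i *v x = 0 \<longleftrightarrow> (M *v x) $ i = 0" for i x
    by (simp add: M_def vec_eq_iff forall_1 matrix_vector_mult_def)
  then have "y \<in> K"
    using \<open>M *v y = 0\<close> by (simp add: K_def)
  moreover have "vec.subspace K"
    by (simp add: K_def vec.subspace_def matrix_vector_right_distrib vector_scalar_commute)
  ultimately show ?thesis
    using that[of K] \<open>y \<noteq> 0\<close> by (auto simp: is_subrep_def K_def vec.subspace_0)
qed

theorem mainTheorem12:
  fixes \<alpha> \<gamma> :: real and R :: repQ
  assumes "\<alpha> > 0" and "\<gamma> < 0"
    and "relations_hold R"
    and "theta_stable (\<alpha>, - (\<alpha> + \<gamma>) / 4, \<gamma>) R"
  shows "(\<not> globally_injective R \<longrightarrow> \<gamma> < - \<alpha>) \<and> (\<not> globally_surjective R \<longrightarrow> \<gamma> > - \<alpha>)"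
proof -
  have dim_V0: "vec.dim (UNIV :: (complex^4) set) = 4"
    and dim_V1: "vec.dim (UNIV :: (complex^1) set) = 1"
    by (simp_all only: vec_dim_card) simp_all
  then have V1_nontrivial: "(UNIV :: (complex^1) set) \<noteq> {0}"
    by auto
  have "\<gamma> < - \<alpha>" if non_inj: "\<not> globally_injective R"
  proof -
    obtain S where S: "is_subrep R UNIV S UNIV" "vec.dim S < 4"
      using non_inj by (rule subrep_of_not_globally_injective)
    then have "S \<noteq> UNIV"
      using dim_V0 by auto
    then have "\<alpha> + (- \<alpha> - \<gamma>) * real (vec.dim S) / 4 + \<gamma> < 0"
      using theta_stableD[OF assms(4) S(1)] V1_nontrivial unfolding dim_V1 by simp
    then have "(\<alpha> + \<gamma>) * (4 - real (vec.dim S)) < 0"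
      by (simp add: algebra_simps divide_simps)
    then show ?thesis
      using S(2) by (simp add: mult_less_0_iff)
  qed
  moreover have "\<gamma> > - \<alpha>" if non_surj: "\<not> globally_surjective R"
  proof -
    obtain K where K: "is_subrep R {0} K {0}" "K \<noteq> {0}"
      using non_surj by (rule subrep_of_not_globally_surjective)
    then have "- (\<alpha> + \<gamma>) / 4 * real (vec.dim K) < 0"
      using theta_stableD[OF assms(4) K(1)] V1_nontrivial by auto
    moreover have "vec.dim K > 0"
      using K by (auto simp: is_subrep_def dest: vec.subspace_0)
    ultimately show ?thesis
      by (simp add: mult_less_0_iff)
  qed
  ultimately show ?thesis
    by blast
qed

end
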